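(* Let $\Gamma$ be a discrete subgroup of $E(n)$, and let $(G,V)$ be a finite index cocompact translation pair of $\Gamma$. Then \[ N_\Gamma(r)=\Theta(N_G(r))=\Theta(N_G^V(r))=\Theta(r^{\dim V})=\Theta(r^{\dim\Gamma}). \] In particular, $\dim\Gamma=k$ if and only if $N_\Gamma(r)=\Theta(r^k)$.
   Context: $E(n)$ denotes the group of isometries of $\mathbb{R}^n$; each $\gamma\in E(n)$ has the form $x\mapsto Ax+a$ with $A\in O(n)$, $a\in\mathbb{R}^n$, and $T(\gamma)=a$. $E(n)$ has the topology of $O(n)\times\mathbb{R}^n$. For a discrete $\Gamma\le E(n)$, a subgroup $G\le\Gamma$ and an affine subspace $V$, $(G,V)$ is a cocompact translation pair of $\Gamma$ if $gV=V$ and $g|_V$ is a translation of $V$, with translation vector $T_V(g)$, for all $g\in G$, and $V/G$ is compact; it is a finite index cocompact translation pair if moreover $[\Gamma:G]<\infty$. $\dim\Gamma:=\dim V$ for any finite index cocompact translation pair (independent of choice). For a discrete group $H\le E(n)$, $N_H(r)$ is the number of $\gamma\in H$ with $|T(\gamma)|\le r$; $N_G^V(r)$ is the number of $\gamma\in G$ with $|T_V(\gamma)|\le r$. For $f,g\colon[0,\infty)\to[0,\infty)$, $f=O(g)$ means $\limsup_{t\to\infty}f(t)/g(t)<\infty$, and $f=\Theta(g)$ means $f=O(g)$ and $g=O(f)$. *)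

theory Defs
  imports "HOL-Analysis.Analysis" "HOL-Library.Landau_Symbols"
begin

text \<open>An isometry x \<mapsto> A x + a of R^n is represented by the pair (A, a),
  with A an orthogonal matrix.  E(n) carries the topology of O(n) \<times> R^n,
  i.e. the subspace topology of the product euclidean space of pairs.\<close>

type_synonym 'n iso = "(real^'n^'n) \<times> (real^'n)"

definition Eucl :: "'n::finite iso set" where
  "Eucl = {(A, a). orthogonal_matrix A}"

definition iso_apply :: "'n::finite iso \<Rightarrow> real^'n \<Rightarrow> real^'n" where
  "iso_apply g x = fst g *v x + snd g"

definition iso_mult :: "'n::finite iso \<Rightarrow> 'n iso \<Rightarrow> 'n iso" where
  "iso_mult g h = (fst g ** fst h, fst g *v snd h + snd g)"

definition iso_one :: "'n::finite iso" where
  "iso_one = (mat 1, 0)"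

definition iso_inv :: "'n::finite iso \<Rightarrow> 'n iso" where
  "iso_inv g = (transpose (fst g), - (transpose (fst g) *v snd g))"

definition T :: "'n::finite iso \<Rightarrow> real^'n" where
  "T g = snd g"

definition iso_subgroup :: "'n::finite iso set \<Rightarrow> 'n iso set \<Rightarrow> bool" where
  "iso_subgroup H K \<longleftrightarrow> H \<subseteq> K \<and> iso_one \<in> H \<and>
     (\<forall>g\<in>H. \<forall>h\<in>H. iso_mult g h \<in> H) \<and> (\<forall>g\<in>H. iso_inv g \<in> H)"

definition discrete_subgroup :: "'n::finite iso set \<Rightarrow> bool" where
  "discrete_subgroup \<Gamma> \<longleftrightarrow> iso_subgroup \<Gamma> Eucl \<and>
     (\<forall>g\<in>\<Gamma>. \<exists>e>0. \<forall>h\<in>\<Gamma>. dist h g < e \<longrightarrow> h = g)"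

definition finite_index :: "'n::finite iso set \<Rightarrow> 'n iso set \<Rightarrow> bool" where
  "finite_index \<Gamma> G \<longleftrightarrow> finite ((\<lambda>g. iso_mult g ` G) ` \<Gamma>)"

text \<open>Translation vector T_V(g) of g restricted to V (well defined when g|V is a
  translation of nonempty V).\<close>
definition TV :: "(real^'n) set \<Rightarrow> 'n::finite iso \<Rightarrow> real^'n" where
  "TV V g = iso_apply g (SOME x. x \<in> V) - (SOME x. x \<in> V)"

text \<open>Compactness of the orbit space V/G with the quotient topology, unfolded:
  the open sets of V/G correspond to the G-invariant relatively open subsets of V.\<close>
definition orbit_space_compact :: "'n::finite iso set \<Rightarrow> (real^'n) set \<Rightarrow> bool" where
  "orbit_space_compact G V \<longleftrightarrow>
     (\<forall>\<U>. (\<forall>U\<in>\<U>. openin (top_of_set V) U \<and> (\<forall>g\<in>G. iso_apply g ` U \<subseteq> U)) \<and> V \<subseteq> \<Union>\<U>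
        \<longrightarrow> (\<exists>\<V>\<subseteq>\<U>. finite \<V> \<and> V \<subseteq> \<Union>\<V>))"

definition cocompact_translation_pair ::
  "'n::finite iso set \<Rightarrow> 'n iso set \<Rightarrow> (real^'n) set \<Rightarrow> bool" where
  "cocompact_translation_pair \<Gamma> G V \<longleftrightarrow>
     iso_subgroup G \<Gamma> \<and> affine V \<and> V \<noteq> {} \<and>
     (\<forall>g\<in>G. iso_apply g ` V = V \<and> (\<exists>t. \<forall>x\<in>V. iso_apply g x = x + t)) \<and>
     orbit_space_compact G V"

definition fi_cocompact_translation_pair ::
  "'n::finite iso set \<Rightarrow> 'n iso set \<Rightarrow> (real^'n) set \<Rightarrow> bool" where
  "fi_cocompact_translation_pair \<Gamma> G V \<longleftrightarrow>
     cocompact_translation_pair \<Gamma> G V \<and> finite_index \<Gamma> G"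

definition adim :: "(real^'n::finite) set \<Rightarrow> nat" where
  "adim V = nat (aff_dim V)"

definition dimGamma :: "'n::finite iso set \<Rightarrow> nat" where
  "dimGamma \<Gamma> = (THE k. \<exists>G V. fi_cocompact_translation_pair \<Gamma> G V \<and> adim V = k)"

definition Ncount :: "'n::finite iso set \<Rightarrow> real \<Rightarrow> real" where
  "Ncount H r = real (card {\<gamma>\<in>H. norm (T \<gamma>) \<le> r})"

definition NcountV :: "'n::finite iso set \<Rightarrow> (real^'n) set \<Rightarrow> real \<Rightarrow> real" where
  "NcountV G V r = real (card {\<gamma>\<in>G. norm (TV V \<gamma>) \<le> r})"

end

theory Submission
  imports Defs "HOL-Real_Asymp.Real_Asymp"
begin

text \<open>The translation vectors \<open>L = T\<^sub>V(G)\<close> form a subgroup of the direction space \<open>W\<close> of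
  \<open>V\<close>. Discreteness of \<open>\<Gamma>\<close> makes \<open>L\<close> uniformly discrete and compactness of \<open>V/G\<close> makes it
  \<open>R\<close>-dense in \<open>W\<close>, so a grid argument in orthonormal coordinates of \<open>W\<close> puts between
  \<open>c r\<^sup>k\<close> and \<open>C r\<^sup>k\<close> points of \<open>L\<close> in the \<open>r\<close>-ball, \<open>k = dim V\<close>. Passing from \<open>L\<close> to
  \<open>N\<^sub>G\<^sup>V\<close>, \<open>N\<^sub>G\<close> and \<open>N\<^sub>\<Gamma>\<close> costs only a constant factor (the fibres of \<open>T\<^sub>V\<close> are cosets
  of a finite kernel, \<open>\<Gamma>\<close> is a finite union of cosets \<open>\<gamma> G\<close>) and a bounded shift of \<open>r\<close>
  (\<open>|T g - T\<^sub>V g|\<close> is bounded on \<open>G\<close>), neither of which changes \<open>\<Theta>(r\<^sup>k)\<close>. Distinct powers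
  of \<open>r\<close> have distinct growth, so \<open>dim \<Gamma>\<close> is well defined and equals \<open>dim V\<close>.\<close>

section \<open>Orthogonal matrices and Euclidean isometries\<close>

lemma matrix_vector_mult_uminus_right: "(A::'a::ring_1^'n^'m) *v (- x) = - (A *v x)"
  by (simp add: matrix_vector_mult_def vec_eq_iff sum_negf)

lemma matrix_mult_diff_rdistrib: "((X::'a::ring_1^'n^'m) - Y) ** Z = X ** Z - Y ** Z"
  by (simp add: vec_eq_iff matrix_matrix_mult_def sum_subtractf left_diff_distrib)

lemma norm_orthogonal_matrix_mult:
  assumes "orthogonal_matrix (A::real^'n^'n)" shows "norm (A *v x) = norm x"
  using assms orthogonal_transformation_matrix[of "(*v) A"]
  by (simp add: orthogonal_transformation_norm)

lemma norm_matrix_vector_mult_le: "norm ((M::real^'n^'m) *v x) \<le> norm M * norm x"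
proof -
  have "norm (M *v x) = L2_set (\<lambda>i. \<bar>M $ i \<bullet> x\<bar>) UNIV"
    by (simp add: norm_vec_def matrix_vector_mult_def inner_vec_def)
  also have "\<dots> \<le> L2_set (\<lambda>i. norm x * norm (M $ i)) UNIV"
    by (rule L2_set_mono) (simp_all, metis Cauchy_Schwarz_ineq2 mult.commute)
  also have "\<dots> = norm x * norm M"
    by (simp add: norm_vec_def L2_set_right_distrib)
  finally show ?thesis by (simp add: mult.commute)
qed

lemma norm_matrix_mult_transpose_orthogonal:
  assumes "orthogonal_matrix (A::real^'n^'n)" shows "norm ((M::real^'n^'m) ** transpose A) = norm M"
proof -
  have "(M ** transpose A) $ i = A *v (M $ i)" for i
    by (simp add: vec_eq_iff matrix_matrix_mult_def matrix_vector_mult_def transpose_def mult.commute)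
  then show ?thesis
    unfolding norm_vec_def[of "M ** transpose A"] norm_vec_def[of M]
    by (simp add: norm_orthogonal_matrix_mult[OF assms])
qed

lemma norm_orthogonal_matrix_le: assumes "orthogonal_matrix (A::real^'n^'n)" shows "norm A \<le> CARD('n)"
proof -
  have rows: "norm (A $ i) = 1" for i
    using assms unfolding orthogonal_matrix_orthonormal_rows by (metis row_def vec_nth_inverse)
  have "norm A = L2_set (\<lambda>i. norm (A $ i)) UNIV" by (simp add: norm_vec_def)
  also have "\<dots> \<le> (\<Sum>i\<in>UNIV. norm (A $ i))" by (rule L2_set_le_sum) auto
  finally show ?thesis by (simp add: rows)
qed

lemma iso_apply_mult: "iso_apply (iso_mult g h) x = iso_apply g (iso_apply h x)"
  by (simp add: iso_apply_def iso_mult_def matrix_vector_mul_assoc matrix_vector_right_distrib add.assoc)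

lemma iso_apply_one [simp]: "iso_apply iso_one x = x"
  by (simp add: iso_apply_def iso_one_def)

lemma iso_mult_assoc: "iso_mult (iso_mult g h) k = iso_mult g (iso_mult h k)"
  by (simp add: iso_mult_def matrix_mul_assoc matrix_vector_mul_assoc matrix_vector_right_distrib add.assoc)

lemma iso_mult_one [simp]: "iso_mult g iso_one = g"
  by (simp add: iso_mult_def iso_one_def)

lemma iso_one_mult [simp]: "iso_mult iso_one g = g"
  by (simp add: iso_mult_def iso_one_def)

lemma iso_mult_inv_left:
  assumes "orthogonal_matrix (fst g)" shows "iso_mult (iso_inv g) g = iso_one"
  using assms by (simp add: iso_mult_def iso_inv_def iso_one_def orthogonal_matrix_def)

lemma iso_mult_inv_right:
  assumes "orthogonal_matrix (fst g)" shows "iso_mult g (iso_inv g) = iso_one"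
proof -
  have "fst g *v (transpose (fst g) *v snd g) = snd g"
    using assms by (metis matrix_vector_mul_assoc matrix_vector_mul_lid orthogonal_matrix_def)
  then show ?thesis
    using assms by (simp add: iso_mult_def iso_inv_def iso_one_def orthogonal_matrix_def
        matrix_vector_mult_uminus_right del: transpose_matrix_vector)
qed

lemma iso_mult_inv_cancel_left:
  assumes "orthogonal_matrix (fst g)" shows "iso_mult g (iso_mult (iso_inv g) h) = h"
  by (simp add: iso_mult_assoc[symmetric] iso_mult_inv_right[OF assms])

lemma iso_mult_inv_eq_one_imp_eq:
  assumes "orthogonal_matrix (fst g)" "iso_mult h (iso_inv g) = iso_one"
  shows "h = g"
  by (metis assms iso_mult_assoc iso_mult_inv_left iso_mult_one iso_one_mult)

lemma T_iso_mult: "T (iso_mult g h) = fst g *v T h + T g"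
  by (simp add: T_def iso_mult_def)

lemma dist_iso_mult_inv_one_le:
  assumes "orthogonal_matrix (fst g)"
  shows "dist (iso_mult h (iso_inv g)) iso_one \<le> dist h g * (2 + norm (T g))"
proof -
  obtain A a B b where g: "g = (A, a)" and h: "h = (B, b)" by (cases g, cases h)
  have oA: "orthogonal_matrix A" using assms g by simp
  have AA: "A ** transpose A = mat 1" using oA by (simp add: orthogonal_matrix_def)
  have hg: "iso_mult h (iso_inv g) = (B ** transpose A, b - (B ** transpose A) *v a)"
    by (simp add: h g iso_mult_def iso_inv_def matrix_vector_mult_uminus_right matrix_vector_mul_assoc
        del: transpose_matrix_vector)
  have BA: "B ** transpose A = mat 1 + (B - A) ** transpose A"
    by (simp add: matrix_mult_diff_rdistrib AA)
  have ba: "b - (B ** transpose A) *v a = (b - a) - ((B - A) ** transpose A) *v a"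
    by (simp add: matrix_mult_diff_rdistrib AA matrix_vector_mult_diff_rdistrib)
  have dB: "norm (B - A) \<le> dist h g" and db: "norm (b - a) \<le> dist h g"
    using dist_fst_le[of h g] dist_snd_le[of h g] by (simp_all add: h g dist_norm)
  have "dist (iso_mult h (iso_inv g)) iso_one
      \<le> dist (B ** transpose A) (mat 1) + dist (b - (B ** transpose A) *v a) 0"
    unfolding hg iso_one_def dist_Pair_Pair by (rule sqrt_sum_squares_le_sum) simp_all
  also have "\<dots> = norm ((B - A) ** transpose A) + norm ((b - a) - ((B - A) ** transpose A) *v a)"
    unfolding dist_norm ba unfolding BA by simp
  also have "\<dots> \<le> norm (B - A) + (norm (b - a) + norm (B - A) * norm a)"
    using norm_triangle_ineq4[of "b - a" "((B - A) ** transpose A) *v a"]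
      norm_matrix_vector_mult_le[of "(B - A) ** transpose A" a]
    by (simp add: norm_matrix_mult_transpose_orthogonal[OF oA])
  also have "\<dots> \<le> dist h g * (2 + norm (T g))"
    using dB db mult_left_mono[OF dB norm_ge_zero[of a]] by (simp add: g T_def algebra_simps)
  finally show ?thesis .
qed

section \<open>Discrete subgroups of \<open>E(n)\<close>\<close>

text \<open>Right translation by \<open>g\<inverse>\<close> carries the isolation of \<open>iso_one\<close> in \<open>\<Gamma>\<close> to a gap around
  \<open>g\<close> whose size depends on \<open>|T g|\<close> only, hence is uniform on bounded sets.\<close>

lemma discrete_subgroup_finite_ball:
  assumes "discrete_subgroup \<Gamma>"
  shows "finite {\<gamma>\<in>\<Gamma>. norm (T \<gamma>) \<le> r}"
proof -
  let ?S = "{\<gamma>\<in>\<Gamma>. norm (T \<gamma>) \<le> r}"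
  have sub: "iso_subgroup \<Gamma> Eucl" and isolated: "\<forall>g\<in>\<Gamma>. \<exists>e>0. \<forall>h\<in>\<Gamma>. dist h g < e \<longrightarrow> h = g"
    using assms by (auto simp: discrete_subgroup_def)
  have orth: "orthogonal_matrix (fst g)" if "g \<in> \<Gamma>" for g
    using sub that by (auto simp: iso_subgroup_def Eucl_def)
  obtain e where e: "e > 0" "\<And>h. h \<in> \<Gamma> \<Longrightarrow> dist h iso_one < e \<Longrightarrow> h = iso_one"
    using isolated sub by (auto simp: iso_subgroup_def)
  have "bounded ?S"
    unfolding bounded_iff
  proof (intro exI ballI)
    fix g assume g: "g \<in> ?S"
    have "norm g \<le> norm (fst g) + norm (snd g)" by (metis norm_Pair_le prod.collapse)
    also have "\<dots> \<le> CARD('a) + r"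
      using g orth[of g] norm_orthogonal_matrix_le by (auto simp: T_def intro: add_mono)
    finally show "norm g \<le> CARD('a) + r" .
  qed
  moreover have "uniform_discrete ?S"
  proof (rule uniformI1)
    show "e / (2 + \<bar>r\<bar>) > 0" using e by simp
    fix h g assume h: "h \<in> ?S" and g: "g \<in> ?S" and d: "dist h g < e / (2 + \<bar>r\<bar>)"
    have "dist (iso_mult h (iso_inv g)) iso_one \<le> dist h g * (2 + norm (T g))"
      using dist_iso_mult_inv_one_le orth g by blast
    also have "\<dots> \<le> dist h g * (2 + \<bar>r\<bar>)" using g by (intro mult_left_mono) auto
    also have "\<dots> < e" using d by (simp add: pos_less_divide_eq)
    finally have "iso_mult h (iso_inv g) = iso_one"
      using e h g sub by (auto simp: iso_subgroup_def)
    then show "h = g" using iso_mult_inv_eq_one_imp_eq orth g by blast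
  qed
  ultimately show ?thesis using uniform_discrete_finite_iff by blast
qed

section \<open>Counting points in the span of an orthonormal set\<close>

definition orthonormal :: "'a::real_inner set \<Rightarrow> bool" where
  "orthonormal B \<longleftrightarrow> pairwise orthogonal B \<and> (\<forall>b\<in>B. norm b = 1)"

lemma orthonormal_finite: "orthonormal (B :: 'a::euclidean_space set) \<Longrightarrow> finite B"
  by (simp add: orthonormal_def pairwise_orthogonal_imp_finite)

lemma inner_sum_orthonormal:
  assumes "orthonormal B" "finite B" "b' \<in> B"
  shows "(\<Sum>b\<in>B. c b *\<^sub>R b) \<bullet> b' = c b'"
proof -
  have "(\<Sum>b\<in>B. c b * (b \<bullet> b')) = (\<Sum>b\<in>B. if b = b' then c b' else 0)"
    using assms(1,3) by (intro sum.cong) (auto simp: orthonormal_def pairwise_def orthogonal_def norm_eq_1)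
  then have "(\<Sum>b\<in>B. c b *\<^sub>R b) \<bullet> b' = (\<Sum>b\<in>B. if b = b' then c b' else 0)"
    by (simp add: inner_sum_left)
  with assms(2,3) show ?thesis by simp
qed

lemma norm_power2_eq_sum_inner_orthonormal:
  fixes B :: "'a::euclidean_space set"
  assumes "orthonormal B" "x \<in> span B"
  shows "(norm x)\<^sup>2 = (\<Sum>b\<in>B. (x \<bullet> b)\<^sup>2)"
proof -
  have B: "finite B" using orthonormal_finite[OF assms(1)] .
  obtain c where x: "x = (\<Sum>b\<in>B. c b *\<^sub>R b)"
    using assms(2) span_finite[OF B] by auto
  have "(norm x)\<^sup>2 = x \<bullet> x" by (simp add: power2_norm_eq_inner)
  also have "\<dots> = (\<Sum>b\<in>B. c b * (x \<bullet> b))"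
    by (subst (2) x) (simp add: inner_sum_right)
  also have "\<dots> = (\<Sum>b\<in>B. (x \<bullet> b)\<^sup>2)"
    unfolding x using inner_sum_orthonormal[OF assms(1) B] by (simp add: power2_eq_square)
  finally show ?thesis .
qed

lemma dist_le_if_same_grid_cell:
  fixes B :: "'a::euclidean_space set"
  assumes B: "orthonormal B" and pq: "p \<in> span B" "q \<in> span B" and \<epsilon>: "\<epsilon> > 0"
    and cell: "\<And>b. b \<in> B \<Longrightarrow> \<lfloor>(p \<bullet> b) / \<epsilon>\<rfloor> = \<lfloor>(q \<bullet> b) / \<epsilon>\<rfloor>"
  shows "dist p q \<le> sqrt (card B) * \<epsilon>"
proof -
  have coord: "((p - q) \<bullet> b)\<^sup>2 \<le> \<epsilon>\<^sup>2" if b: "b \<in> B" for b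
  proof -
    have "(p \<bullet> b) / \<epsilon> - (q \<bullet> b) / \<epsilon> = ((p - q) \<bullet> b) / \<epsilon>"
      by (simp add: inner_diff_left diff_divide_distrib)
    moreover have "\<bar>(p \<bullet> b) / \<epsilon> - (q \<bullet> b) / \<epsilon>\<bar> < 1"
      using floor_correct[of "(p \<bullet> b) / \<epsilon>"] floor_correct[of "(q \<bullet> b) / \<epsilon>"]
      unfolding cell[OF b] by linarith
    ultimately have "\<bar>(p - q) \<bullet> b\<bar> < \<epsilon>"
      using \<epsilon> by (simp add: abs_divide)
    then show ?thesis using abs_le_square_iff[of "(p - q) \<bullet> b" \<epsilon>] \<epsilon> by simp
  qed
  have "(dist p q)\<^sup>2 = (\<Sum>b\<in>B. ((p - q) \<bullet> b)\<^sup>2)"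
    unfolding dist_norm by (rule norm_power2_eq_sum_inner_orthonormal[OF B span_diff[OF pq]])
  also have "\<dots> \<le> (\<Sum>b\<in>B. \<epsilon>\<^sup>2)" by (rule sum_mono) (rule coord)
  also have "\<dots> = (sqrt (card B) * \<epsilon>)\<^sup>2" by (simp add: power_mult_distrib)
  finally have "(dist p q)\<^sup>2 \<le> (sqrt (card B) * \<epsilon>)\<^sup>2" .
  then show ?thesis by (rule power2_le_imp_le) (use \<epsilon> in simp)
qed

text \<open>Points of \<open>P\<close> lie in distinct cells of the coordinate grid of mesh
  \<open>\<delta> / (sqrt k + 1)\<close>, and a ball of radius \<open>r\<close> meets few cells.\<close>

lemma card_separated_in_span_le:
  fixes B :: "'a::euclidean_space set"
  assumes B: "orthonormal B" and P: "P \<subseteq> span B" and \<delta>: "\<delta> > 0"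
    and sep: "\<And>x y. x \<in> P \<Longrightarrow> y \<in> P \<Longrightarrow> x \<noteq> y \<Longrightarrow> \<delta> \<le> dist x y"
    and bd: "\<And>p. p \<in> P \<Longrightarrow> norm p \<le> r" and r: "r \<ge> 0"
  shows "real (card P) \<le> (2 * r * (sqrt (card B) + 1) / \<delta> + 4) ^ card B"
proof -
  have finB: "finite B" using orthonormal_finite[OF B] .
  define \<epsilon> where "\<epsilon> = \<delta> / (sqrt (card B) + 1)"
  have k: "sqrt (card B) + 1 > 0" by (simp add: add_nonneg_pos)
  have \<epsilon>: "\<epsilon> > 0" using \<delta> k by (simp add: \<epsilon>_def)
  define N where "N = nat \<lceil>r / \<epsilon>\<rceil>"
  define cell where "cell p = restrict (\<lambda>b. \<lfloor>(p \<bullet> b) / \<epsilon>\<rfloor>) B" for p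
  have cells: "cell ` P \<subseteq> PiE B (\<lambda>_. {- int N - 1 .. int N})"
  proof (clarsimp simp: cell_def)
    fix p b assume p: "p \<in> P" and b: "b \<in> B"
    have "\<bar>p \<bullet> b\<bar> \<le> r"
      using Cauchy_Schwarz_ineq2[of p b] bd[OF p] B b by (simp add: orthonormal_def)
    then have "\<bar>(p \<bullet> b) / \<epsilon>\<bar> \<le> r / \<epsilon>"
      using \<epsilon> by (simp add: abs_divide divide_right_mono)
    also have "\<dots> \<le> N" unfolding N_def by (rule real_nat_ceiling_ge)
    finally have "\<bar>(p \<bullet> b) / \<epsilon>\<bar> \<le> N" .
    then show "- int N - 1 \<le> \<lfloor>(p \<bullet> b) / \<epsilon>\<rfloor> \<and> \<lfloor>(p \<bullet> b) / \<epsilon>\<rfloor> \<le> int N"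
      by (simp only: abs_le_iff floor_le_iff le_floor_iff) linarith
  qed
  have "inj_on cell P"
  proof (rule inj_onI, rule ccontr)
    fix p q assume p: "p \<in> P" and q: "q \<in> P" and eq: "cell p = cell q" and ne: "p \<noteq> q"
    have "dist p q \<le> sqrt (card B) * \<epsilon>"
    proof (rule dist_le_if_same_grid_cell[OF B _ _ \<epsilon>])
      show "p \<in> span B" "q \<in> span B" using P p q by auto
      show "\<lfloor>(p \<bullet> b) / \<epsilon>\<rfloor> = \<lfloor>(q \<bullet> b) / \<epsilon>\<rfloor>" if "b \<in> B" for b
        using fun_cong[OF eq, of b] that by (simp add: cell_def)
    qed
    also have "\<dots> < (sqrt (card B) + 1) * \<epsilon>" using \<epsilon> by (simp add: distrib_right)
    also have "\<dots> = \<delta>" unfolding \<epsilon>_def using k by simp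
    finally show False using sep[OF p q ne] by simp
  qed
  then have "card P \<le> card (PiE B (\<lambda>_. {- int N - 1 .. int N}))"
    by (rule card_inj_on_le[OF _ cells]) (simp add: finB finite_PiE)
  also have "\<dots> = (2 * N + 2) ^ card B"
  proof -
    have "card {- int N - 1 .. int N} = 2 * N + 2" by simp
    then show ?thesis by (simp only: card_PiE[OF finB] prod_constant)
  qed
  finally have "real (card P) \<le> (2 * real N + 2) ^ card B"
    by (simp add: of_nat_le_iff[symmetric, where 'a=real] add.commute)
  also have "\<dots> \<le> (2 * r * (sqrt (card B) + 1) / \<delta> + 4) ^ card B"
  proof (rule power_mono)
    have "real N \<le> r / \<epsilon> + 1"
      using r \<epsilon> of_int_ceiling_le_add_one[of "r / \<epsilon>"] by (simp add: N_def)
    then show "2 * real N + 2 \<le> 2 * r * (sqrt (card B) + 1) / \<delta> + 4"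
      by (simp add: \<epsilon>_def)
  qed simp
  finally show ?thesis .
qed

text \<open>The points of \<open>span B\<close> with integer coordinates times \<open>3 R + 1\<close> are more than
  \<open>2 R\<close> apart, so points of \<open>L\<close> within distance \<open>R\<close> of them are pairwise distinct.\<close>

lemma card_net_in_span_ge:
  fixes B :: "'a::euclidean_space set" and M :: nat and R :: real
  assumes B: "orthonormal B" and R: "R \<ge> 0"
    and net: "\<And>w. w \<in> span B \<Longrightarrow> \<exists>t\<in>L. dist w t \<le> R"
    and fin: "finite {t\<in>L. norm t \<le> card B * (3 * R + 1) * M + R}"
  shows "(2 * M + 1) ^ card B \<le> card {t\<in>L. norm t \<le> card B * (3 * R + 1) * M + R}"
proof -
  have finB: "finite B" using orthonormal_finite[OF B] .
  have unit: "norm b = 1" if "b \<in> B" for b using B that by (simp add: orthonormal_def)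
  define Q where "Q = PiE B (\<lambda>_. {- int M .. int M})"
  define p where "p m = (\<Sum>b\<in>B. ((3 * R + 1) * of_int (m b)) *\<^sub>R b)" for m :: "'a \<Rightarrow> int"
  have "p m \<in> span B" for m
    unfolding p_def by (intro span_sum span_scale span_base)
  then have "\<forall>m. \<exists>t\<in>L. dist (p m) t \<le> R" using net by blast
  then obtain t where t: "\<And>m. t m \<in> L" "\<And>m. dist (p m) (t m) \<le> R"
    by metis
  have "inj_on t Q"
  proof (rule inj_onI, rule ccontr)
    fix m m' assume m: "m \<in> Q" and m': "m' \<in> Q" and eq: "t m = t m'" and ne: "m \<noteq> m'"
    obtain b where b: "b \<in> B" and mb: "m b \<noteq> m' b"
      using ne m m' unfolding Q_def by (meson PiE_ext)
    have "3 * R + 1 \<le> (3 * R + 1) * \<bar>real_of_int (m b - m' b)\<bar>"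
      using mb R by (intro mult_le_cancel_left1[THEN iffD2] impI) linarith+
    also have "\<dots> = \<bar>(p m - p m') \<bullet> b\<bar>"
      using R by (simp add: inner_diff_left p_def inner_sum_orthonormal[OF B finB b]
          abs_mult flip: right_diff_distrib)
    also have "\<dots> \<le> dist (p m) (p m')"
      using Cauchy_Schwarz_ineq2[of "p m - p m'" b] unit[OF b] by (simp add: dist_norm)
    also have "\<dots> \<le> dist (p m) (t m) + dist (p m') (t m')"
      using eq by (metis dist_commute dist_triangle)
    also have "\<dots> \<le> 2 * R" using t(2)[of m] t(2)[of m'] by simp
    finally show False using R by simp
  qed
  moreover have "t ` Q \<subseteq> {t\<in>L. norm t \<le> card B * (3 * R + 1) * M + R}"
  proof clarify
    fix m assume m: "m \<in> Q"
    have "norm (p m) \<le> (\<Sum>b\<in>B. norm (((3 * R + 1) * of_int (m b)) *\<^sub>R b))"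
      unfolding p_def by (rule norm_sum)
    also have "\<dots> \<le> (\<Sum>b\<in>B. (3 * R + 1) * M)"
    proof (rule sum_mono)
      fix b assume b: "b \<in> B"
      have "\<bar>real_of_int (m b)\<bar> \<le> M" using m b unfolding Q_def by (auto simp: PiE_iff)
      then show "norm (((3 * R + 1) * of_int (m b)) *\<^sub>R b) \<le> (3 * R + 1) * M"
        using unit[OF b] R by (simp add: abs_mult mult_left_mono)
    qed
    finally have "norm (p m) \<le> card B * (3 * R + 1) * M" by simp
    moreover have "norm (t m) \<le> norm (p m) + dist (p m) (t m)"
      by (metis dist_norm norm_triangle_sub add.commute norm_minus_commute)
    ultimately show "t m \<in> L \<and> norm (t m) \<le> card B * (3 * R + 1) * M + R"
      using t[of m] by linarith
  qed
  ultimately have "card Q \<le> card {t\<in>L. norm t \<le> card B * (3 * R + 1) * M + R}"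
    using fin by (rule card_inj_on_le)
  moreover have "card Q = (2 * M + 1) ^ card B"
  proof -
    have "card {- int M .. int M} = 2 * M + 1" by simp
    then show ?thesis unfolding Q_def by (simp only: card_PiE[OF finB] prod_constant)
  qed
  ultimately show ?thesis by simp
qed

lemma card_le_mult_card_image:
  assumes "finite S" "\<And>y. y \<in> f ` S \<Longrightarrow> card {x\<in>S. f x = y} \<le> k"
  shows "card S \<le> k * card (f ` S)"
proof -
  have "card S = card (\<Union>y\<in>f ` S. {x\<in>S. f x = y})" by (rule arg_cong[of _ _ card]) blast
  also have "\<dots> \<le> (\<Sum>y\<in>f ` S. card {x\<in>S. f x = y})" by (rule card_UN_le) (use assms(1) in simp)
  also have "\<dots> \<le> (\<Sum>y\<in>f ` S. k)" by (rule sum_mono) (rule assms(2))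
  finally show ?thesis by (simp add: mult.commute)
qed

section \<open>Polynomial growth\<close>

lemma bigtheta_power_shift:
  assumes "f \<in> \<Theta>(\<lambda>r. r ^ d)"
  shows "(\<lambda>r. f (r + c)) \<in> \<Theta>(\<lambda>r::real. r ^ d)"
proof -
  have "filterlim (\<lambda>r::real. r + c) at_top at_top" by real_asymp
  with assms have "(\<lambda>r. f (r + c)) \<in> \<Theta>(\<lambda>r. (r + c) ^ d)" by (rule landau_theta.compose)
  also have "(\<lambda>r::real. (r + c) ^ d) \<in> \<Theta>(\<lambda>r. r ^ d)"
  proof -
    have "(\<lambda>r::real. r + c) \<in> \<Theta>(\<lambda>r. r)" by real_asymp
    then show ?thesis by (intro bigthetaI landau_o.big_power landau_omega.big_power) auto
  qed
  finally show ?thesis .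
qed

lemma bigtheta_power_if_between_shifts:
  fixes f g :: "real \<Rightarrow> real"
  assumes f: "f \<in> \<Theta>(\<lambda>r. r ^ d)" "\<And>r. 0 \<le> f r"
    and lower: "\<And>r. f (r - a) \<le> g r" and upper: "\<And>r. g r \<le> q * f (r + b)"
  shows "g \<in> \<Theta>(\<lambda>r. r ^ d)"
proof
  have g: "0 \<le> g r" for r using f(2) lower order_trans by blast
  have "g \<in> O(\<lambda>r. f (r + b))"
    using upper by (intro bigoI[of _ q] always_eventually) (simp add: g f(2))
  also have "(\<lambda>r. f (r + b)) \<in> \<Theta>(\<lambda>r. r ^ d)" by (rule bigtheta_power_shift[OF f(1)])
  finally show "g \<in> O(\<lambda>r. r ^ d)" .
  have "(\<lambda>r. f (r + - a)) \<in> O(g)"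
    using lower by (intro bigoI[of _ 1] always_eventually) (simp add: g f(2))
  then have "g \<in> \<Omega>(\<lambda>r. f (r + - a))" by (simp add: bigomega_iff_bigo)
  also have "(\<lambda>r. f (r + - a)) \<in> \<Theta>(\<lambda>r. r ^ d)" by (rule bigtheta_power_shift[OF f(1)])
  finally show "g \<in> \<Omega>(\<lambda>r. r ^ d)" .
qed

lemma power_bigtheta_power_imp_eq:
  assumes "(\<lambda>r::real. r ^ a) \<in> \<Theta>(\<lambda>r. r ^ b)" shows "a = b"
proof -
  have powr: "(\<lambda>r::real. r ^ k) \<in> \<Theta>(\<lambda>r. r powr real k)" for k
    by (rule bigthetaI_cong) (auto simp: eventually_at_top_linorder powr_realpow intro!: exI[of _ 1])
  have "(\<lambda>r::real. r powr real a) \<in> \<Theta>(\<lambda>r. r ^ a)" using powr by (simp add: bigtheta_sym)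
  also note assms
  also note powr
  finally have "real a = real b"
    using powr_bigtheta_iff[of "\<lambda>x. x" at_top "real a" "real b"] by (simp add: filterlim_ident)
  then show ?thesis by simp
qed

section \<open>Finite index cocompact translation pairs\<close>

locale discrete_translation_pair =
  fixes \<Gamma> G :: "'n::finite iso set" and V :: "(real^'n) set"
  assumes discrete: "discrete_subgroup \<Gamma>"
    and pair: "fi_cocompact_translation_pair \<Gamma> G V"
begin

text \<open>The same choice of base point as in \<open>TV\<close>, so that \<open>TV V g = iso_apply g v0 - v0\<close>.\<close>

definition v0 :: "real^'n" where "v0 = (SOME x. x \<in> V)"

definition W :: "(real^'n) set" where "W = (\<lambda>x. x - v0) ` V"

definition L :: "(real^'n) set" where "L = TV V ` G"

definition NcountL :: "real \<Rightarrow> real" where "NcountL r = real (card {t\<in>L. norm t \<le> r})"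

lemma affine_V: "affine V" and V_nonempty: "V \<noteq> {}"
  and compact_orbit_space: "orbit_space_compact G V" and finite_index_G: "finite_index \<Gamma> G"
  and subgroup_G: "iso_subgroup G \<Gamma>"
  and image_V: "\<And>g. g \<in> G \<Longrightarrow> iso_apply g ` V = V"
  and translation_on_V: "\<And>g. g \<in> G \<Longrightarrow> \<exists>t. \<forall>x\<in>V. iso_apply g x = x + t"
  using pair by (auto simp: fi_cocompact_translation_pair_def cocompact_translation_pair_def)

lemma v0_in_V: "v0 \<in> V"
  unfolding v0_def using V_nonempty by (simp add: some_in_eq)

lemma G_subset: "G \<subseteq> \<Gamma>" and one_in_G: "iso_one \<in> G"
  and mult_in_G: "\<And>g h. g \<in> G \<Longrightarrow> h \<in> G \<Longrightarrow> iso_mult g h \<in> G"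
  and inv_in_G: "\<And>g. g \<in> G \<Longrightarrow> iso_inv g \<in> G"
  using subgroup_G by (auto simp: iso_subgroup_def)

lemma orthogonal_Gamma: "g \<in> \<Gamma> \<Longrightarrow> orthogonal_matrix (fst g)"
  using discrete by (auto simp: discrete_subgroup_def iso_subgroup_def Eucl_def)

lemma orthogonal_G: "g \<in> G \<Longrightarrow> orthogonal_matrix (fst g)"
  using G_subset orthogonal_Gamma by blast

lemma iso_apply_G_V: assumes "g \<in> G" "x \<in> V" shows "iso_apply g x = x + TV V g"
proof -
  obtain t where t: "\<And>x. x \<in> V \<Longrightarrow> iso_apply g x = x + t" using translation_on_V[OF assms(1)] by blast
  have "TV V g = t" unfolding TV_def using t[OF v0_in_V[unfolded v0_def]] by simp
  then show ?thesis using t[OF assms(2)] by simp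
qed

lemma add_TV_in_V: assumes "g \<in> G" "x \<in> V" shows "x + TV V g \<in> V"
  using image_V[OF assms(1)] iso_apply_G_V[OF assms] assms(2) by (metis image_eqI)

lemma TV_mult: assumes "g \<in> G" "h \<in> G" shows "TV V (iso_mult g h) = TV V g + TV V h"
  using iso_apply_G_V[OF mult_in_G[OF assms] v0_in_V] iso_apply_G_V[OF assms(2) v0_in_V]
    iso_apply_G_V[OF assms(1) add_TV_in_V[OF assms(2) v0_in_V]]
  by (simp add: iso_apply_mult add.commute)

lemma TV_one: "TV V iso_one = 0"
  using iso_apply_G_V[OF one_in_G v0_in_V] by simp

lemma TV_inv: assumes "g \<in> G" shows "TV V (iso_inv g) = - TV V g"
  using TV_mult[OF assms inv_in_G[OF assms]] iso_mult_inv_right[OF orthogonal_G[OF assms]]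
  by (simp add: TV_one eq_neg_iff_add_eq_0 add.commute)

lemma subspace_W: "subspace W"
  unfolding W_def by (rule affine_diffs_subspace_subtract[OF affine_V v0_in_V])

lemma adim_eq_dim_W: "adim V = dim W"
proof -
  have "aff_dim V = int (dim W)"
    unfolding W_def using v0_in_V by (intro aff_dim_eq_dim_subtract) (simp add: hull_inc)
  then show ?thesis by (simp add: adim_def)
qed

lemma L_subset_W: "L \<subseteq> W"
  unfolding L_def W_def using add_TV_in_V[OF _ v0_in_V] by force

lemma norm_T_minus_TV_le: assumes "g \<in> G" shows "norm (T g - TV V g) \<le> 2 * norm v0"
proof -
  have "T g - TV V g = v0 - fst g *v v0"
    using iso_apply_G_V[OF assms v0_in_V] by (simp add: iso_apply_def T_def algebra_simps)
  also have "norm \<dots> \<le> 2 * norm v0"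
    using norm_triangle_ineq4[of v0 "fst g *v v0"] norm_orthogonal_matrix_mult[OF orthogonal_G[OF assms]]
    by simp
  finally show ?thesis .
qed

lemma finite_Gamma_ball: "finite {\<gamma>\<in>\<Gamma>. norm (T \<gamma>) \<le> r}"
  by (rule discrete_subgroup_finite_ball[OF discrete])

lemma finite_G_ball: "finite {g\<in>G. norm (T g) \<le> r}"
  by (rule finite_subset[OF _ finite_Gamma_ball]) (use G_subset in auto)

lemma finite_G_ball_TV: "finite {g\<in>G. norm (TV V g) \<le> r}"
proof (rule finite_subset[OF _ finite_G_ball[of "r + 2 * norm v0"]], clarify)
  fix g assume "g \<in> G" "norm (TV V g) \<le> r"
  then show "norm (T g) \<le> r + 2 * norm v0"
    using norm_T_minus_TV_le[of g] norm_triangle_sub[of "T g" "TV V g"] by simp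
qed

lemma L_ball_eq_image: "{t\<in>L. norm t \<le> r} = TV V ` {g\<in>G. norm (TV V g) \<le> r}"
  unfolding L_def by auto

lemma finite_L_ball: "finite {t\<in>L. norm t \<le> r}"
  unfolding L_ball_eq_image using finite_G_ball_TV by simp

lemma diff_in_L: assumes "s \<in> L" "t \<in> L" shows "s - t \<in> L"
proof -
  obtain g h where g: "g \<in> G" "s = TV V g" and h: "h \<in> G" "t = TV V h"
    using assms unfolding L_def by blast
  have "TV V (iso_mult g (iso_inv h)) = s - t"
    using TV_mult[OF g(1) inv_in_G[OF h(1)]] TV_inv[OF h(1)] g h by simp
  then show ?thesis unfolding L_def using mult_in_G[OF g(1) inv_in_G[OF h(1)]] by (metis image_eqI)
qed

text \<open>As \<open>L\<close> is a group, a uniform gap comes from the finitely many points of \<open>L\<close> in the unit ball.\<close>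

lemma L_separated: obtains \<delta> where "\<delta> > 0" "\<And>s t. s \<in> L \<Longrightarrow> t \<in> L \<Longrightarrow> s \<noteq> t \<Longrightarrow> \<delta> \<le> dist s t"
proof -
  have "uniform_discrete {t\<in>L. norm t \<le> 1}"
    using finite_L_ball uniform_discrete_finite_iff by blast
  then obtain e where e: "e > 0" "\<And>s t. s \<in> {t\<in>L. norm t \<le> 1} \<Longrightarrow> t \<in> {t\<in>L. norm t \<le> 1}
      \<Longrightarrow> dist s t < e \<Longrightarrow> s = t"
    unfolding uniform_discrete_def by blast
  have zero: "0 \<in> L" unfolding L_def using TV_one one_in_G by force
  show ?thesis
  proof (rule that[of "min e 1"])
    fix s t assume s: "s \<in> L" and t: "t \<in> L" and ne: "s \<noteq> t"
    have "s - t \<in> L" by (rule diff_in_L[OF s t])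
    then have "min e 1 \<le> dist (s - t) 0"
      using e(2)[of "s - t" 0] zero ne
      by (cases "norm (s - t) \<le> 1") (auto simp: min_le_iff_disj not_less[symmetric])
    then show "min e 1 \<le> dist s t" by (simp add: dist_norm)
  qed (use e in simp)
qed

text \<open>Cocompactness of \<open>V/G\<close> applied to the invariant open cover of \<open>V\<close> by the
  \<open>k\<close>-neighbourhoods of the orbit of \<open>v0\<close>.\<close>

lemma orbit_net: obtains N :: nat where "\<And>x. x \<in> V \<Longrightarrow> \<exists>g\<in>G. dist x (iso_apply g v0) < N"
proof -
  define U where "U k = {x\<in>V. \<exists>g\<in>G. dist x (iso_apply g v0) < real k}" for k :: nat
  have open_U: "openin (top_of_set V) (U k)" for k
  proof -
    have "U k = V \<inter> (\<Union>g\<in>G. ball (iso_apply g v0) (real k))"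
      unfolding U_def by (auto simp: dist_commute)
    then show ?thesis by (simp add: openin_open_Int open_UN)
  qed
  have invariant_U: "iso_apply h ` U k \<subseteq> U k" if h: "h \<in> G" for h k
  proof clarify
    fix x assume "x \<in> U k"
    then obtain g where x: "x \<in> V" and g: "g \<in> G" and d: "dist x (iso_apply g v0) < real k"
      unfolding U_def by blast
    have "iso_apply g v0 \<in> V" using image_V[OF g] v0_in_V by blast
    then have "dist (iso_apply h x) (iso_apply (iso_mult h g) v0) < real k"
      using d by (simp add: iso_apply_mult iso_apply_G_V[OF h x] iso_apply_G_V[OF h] dist_norm)
    moreover have "iso_apply h x \<in> V" using image_V[OF h] x by blast
    ultimately show "iso_apply h x \<in> U k" unfolding U_def using mult_in_G[OF h g] by blast
  qed
  have "V \<subseteq> \<Union>(range U)"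
  proof
    fix x assume x: "x \<in> V"
    have "dist x (iso_apply iso_one v0) < real (nat \<lceil>dist x v0\<rceil> + 1)" by simp linarith
    then show "x \<in> \<Union>(range U)" unfolding U_def using x one_in_G by blast
  qed
  then have "(\<forall>U'\<in>range U. openin (top_of_set V) U' \<and> (\<forall>g\<in>G. iso_apply g ` U' \<subseteq> U'))
      \<and> V \<subseteq> \<Union>(range U)"
    using open_U invariant_U by simp
  then have "\<exists>\<V>\<subseteq>range U. finite \<V> \<and> V \<subseteq> \<Union>\<V>"
    using compact_orbit_space[unfolded orbit_space_compact_def, THEN spec[of _ "range U"]] by (rule rev_mp)
  then obtain \<V> where \<V>: "\<V> \<subseteq> range U" "finite \<V>" "V \<subseteq> \<Union>\<V>" by blast
  obtain K where K: "finite K" "\<V> = U ` K" using finite_subset_image[OF \<V>(2,1)] by blast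
  have "U k \<subseteq> U (Max (insert 0 K))" if "k \<in> K" for k
  proof -
    have "k \<le> Max (insert 0 K)" using K(1) that by simp
    then show ?thesis unfolding U_def by (force intro: less_le_trans)
  qed
  then have "V \<subseteq> U (Max (insert 0 K))" using \<V>(3) K(2) by blast
  then show ?thesis using that unfolding U_def by blast
qed

lemma L_net: obtains R where "R \<ge> 0" "\<And>w. w \<in> W \<Longrightarrow> \<exists>t\<in>L. dist w t \<le> R"
proof -
  obtain N :: nat where N: "\<And>x. x \<in> V \<Longrightarrow> \<exists>g\<in>G. dist x (iso_apply g v0) < N"
    using orbit_net by blast
  show ?thesis
  proof (rule that[of "real N"])
    fix w assume "w \<in> W"
    then have "v0 + w \<in> V" unfolding W_def by auto
    then obtain g where g: "g \<in> G" and d: "dist (v0 + w) (iso_apply g v0) < N"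
      using N by blast
    have "dist w (TV V g) < N" using d by (simp add: iso_apply_G_V[OF g v0_in_V] dist_norm)
    then show "\<exists>t\<in>L. dist w t \<le> real N" unfolding L_def using g by force
  qed simp
qed

lemma orthonormal_basis_W: obtains B where "orthonormal B" "card B = adim V" "span B = W"
proof -
  obtain B where "B \<subseteq> W" "pairwise orthogonal B" "\<And>x. x \<in> B \<Longrightarrow> norm x = 1"
    "independent B" "card B = dim W" "span B = W"
    using orthonormal_basis_subspace[OF subspace_W] by blast
  then show ?thesis using adim_eq_dim_W by (intro that[of B]) (simp_all add: orthonormal_def)
qed

lemma NcountL_bigo: "NcountL \<in> O(\<lambda>r. r ^ adim V)"
proof -
  obtain B where B: "orthonormal B" "card B = adim V" "span B = W" by (rule orthonormal_basis_W)
  obtain \<delta> where \<delta>: "\<delta> > 0" "\<And>s t. s \<in> L \<Longrightarrow> t \<in> L \<Longrightarrow> s \<noteq> t \<Longrightarrow> \<delta> \<le> dist s t"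
    using L_separated by blast
  define c where "c = 2 * (sqrt (card B) + 1) / \<delta> + 4"
  have "norm (NcountL r) \<le> c ^ adim V * norm (r ^ adim V)" if r: "r \<ge> 1" for r
  proof -
    have "NcountL r \<le> (2 * r * (sqrt (card B) + 1) / \<delta> + 4) ^ card B"
      unfolding NcountL_def using L_subset_W B(3) \<delta> r
      by (intro card_separated_in_span_le[OF B(1)]) auto
    also have "\<dots> \<le> (c * r) ^ card B"
    proof (rule power_mono)
      have "c * r = 2 * r * (sqrt (card B) + 1) / \<delta> + 4 * r" by (simp add: c_def algebra_simps)
      then show "2 * r * (sqrt (card B) + 1) / \<delta> + 4 \<le> c * r" using r by simp
    qed (use r \<delta> in simp)
    finally show ?thesis using B(2) r by (simp add: NcountL_def power_mult_distrib)
  qed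
  then show ?thesis
    by (intro bigoI[where c = "c ^ adim V"]) (auto simp: eventually_at_top_linorder intro!: exI[of _ 1])
qed

lemma NcountL_bigomega: "NcountL \<in> \<Omega>(\<lambda>r. r ^ adim V)"
proof -
  obtain B where B: "orthonormal B" "card B = adim V" "span B = W" by (rule orthonormal_basis_W)
  obtain R where R: "R \<ge> 0" "\<And>w. w \<in> W \<Longrightarrow> \<exists>t\<in>L. dist w t \<le> R" using L_net by blast
  define k where "k = adim V"
  define a where "a = (real k + 1) * (3 * R + 1)"
  have a: "a > 0" unfolding a_def using R by (simp add: add_pos_nonneg)
  have "norm (r ^ k) \<le> (2 * a) ^ k * norm (NcountL r)" if r: "r \<ge> 2 * R" "r \<ge> 0" for r
  proof -
    define M where "M = nat \<lfloor>(r - R) / a\<rfloor>"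
    have "0 \<le> (r - R) / a" using r R a by simp
    then have M: "real M \<le> (r - R) / a" "(r - R) / a \<le> real M + 1"
      unfolding M_def by linarith+
    have "real k * (3 * R + 1) * M + R \<le> a * M + R"
      unfolding a_def using R by (intro add_right_mono mult_right_mono) auto
    also have "\<dots> \<le> r" using M(1) a by (simp add: le_divide_eq mult.commute)
    finally have radius: "card B * (3 * R + 1) * M + R \<le> r" using B(2) k_def by simp
    have "r / (2 * a) \<le> (r - R) / a" using r a by (simp add: field_simps)
    then have "(r / (2 * a)) ^ k \<le> (real M + 1) ^ k"
      using M(2) r a by (intro power_mono) auto
    also have "\<dots> \<le> real ((2 * M + 1) ^ k)" by (simp add: power_mono)
    also have "(2 * M + 1) ^ k \<le> card {t\<in>L. norm t \<le> card B * (3 * R + 1) * M + R}"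
      using card_net_in_span_ge[OF B(1) R(1)] R(2) B(2,3) finite_L_ball k_def by simp
    also have "\<dots> \<le> card {t\<in>L. norm t \<le> r}"
      by (rule card_mono[OF finite_L_ball]) (use radius in auto)
    finally show ?thesis using a r by (simp add: NcountL_def power_divide field_simps)
  qed
  then have "(\<lambda>r. r ^ k) \<in> O(NcountL)"
    by (intro bigoI[where c = "(2 * a) ^ k"])
      (auto simp: eventually_at_top_linorder intro!: exI[of _ "max (2 * R) 0"])
  then show ?thesis by (simp add: bigomega_iff_bigo k_def)
qed

lemma NcountL_bigtheta: "NcountL \<in> \<Theta>(\<lambda>r. r ^ adim V)"
  using NcountL_bigo NcountL_bigomega by (rule bigthetaI)

lemma NcountL_le_NcountV: "NcountL r \<le> NcountV G V r"
  unfolding NcountL_def NcountV_def L_ball_eq_image using card_image_le[OF finite_G_ball_TV] by simp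

text \<open>The fibres of \<open>TV V\<close> on \<open>G\<close> are cosets of its kernel, which is finite.\<close>

lemma NcountV_le_NcountL: obtains m where "\<And>r. NcountV G V r \<le> m * NcountL r"
proof -
  define K where "K = {k\<in>G. TV V k = 0}"
  have finite_K: "finite K"
    by (rule finite_subset[OF _ finite_G_ball_TV[of 0]]) (auto simp: K_def)
  have "card {g\<in>G. norm (TV V g) \<le> r} \<le> card K * card (TV V ` {g\<in>G. norm (TV V g) \<le> r})" for r
  proof (rule card_le_mult_card_image[OF finite_G_ball_TV], clarify)
    fix g0 assume g0: "g0 \<in> G" "norm (TV V g0) \<le> r"
    let ?fibre = "{g \<in> {g\<in>G. norm (TV V g) \<le> r}. TV V g = TV V g0}"
    show "card ?fibre \<le> card K"
    proof (rule card_inj_on_le[OF _ _ finite_K])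
      show "inj_on (iso_mult (iso_inv g0)) ?fibre"
      proof (rule inj_onI)
        fix g h assume "iso_mult (iso_inv g0) g = iso_mult (iso_inv g0) h"
        then show "g = h" using iso_mult_inv_cancel_left[OF orthogonal_G[OF g0(1)]] by metis
      qed
      show "iso_mult (iso_inv g0) ` ?fibre \<subseteq> K"
      proof (rule image_subsetI)
        fix g assume "g \<in> ?fibre"
        then have "g \<in> G" "TV V g = TV V g0" by simp_all
        then show "iso_mult (iso_inv g0) g \<in> K"
          using mult_in_G[OF inv_in_G[OF g0(1)]] TV_mult[OF inv_in_G[OF g0(1)]] TV_inv[OF g0(1)]
          by (simp add: K_def)
      qed
    qed
  qed
  then have "NcountV G V r \<le> card K * NcountL r" for r
    unfolding NcountV_def NcountL_def L_ball_eq_image of_nat_mult[symmetric] of_nat_le_iff .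
  then show ?thesis by (rule that)
qed

lemma Ncount_G_le_NcountV: "Ncount G r \<le> NcountV G V (r + 2 * norm v0)"
proof -
  have "norm (TV V g) \<le> norm (T g) + 2 * norm v0" if "g \<in> G" for g
    using norm_T_minus_TV_le[OF that] norm_triangle_sub[of "TV V g" "T g"] by (simp add: norm_minus_commute)
  then have "{g\<in>G. norm (T g) \<le> r} \<subseteq> {g\<in>G. norm (TV V g) \<le> r + 2 * norm v0}" by force
  then show ?thesis unfolding Ncount_def NcountV_def by (simp add: card_mono[OF finite_G_ball_TV])
qed

lemma NcountV_le_Ncount_G: "NcountV G V r \<le> Ncount G (r + 2 * norm v0)"
proof -
  have "norm (T g) \<le> norm (TV V g) + 2 * norm v0" if "g \<in> G" for g
    using norm_T_minus_TV_le[OF that] norm_triangle_sub[of "T g" "TV V g"] by simp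
  then have "{g\<in>G. norm (TV V g) \<le> r} \<subseteq> {g\<in>G. norm (T g) \<le> r + 2 * norm v0}" by force
  then show ?thesis unfolding Ncount_def NcountV_def by (simp add: card_mono[OF finite_G_ball])
qed

lemma Ncount_G_le_Ncount_Gamma: "Ncount G r \<le> Ncount \<Gamma> r"
  unfolding Ncount_def using G_subset by (auto intro: card_mono[OF finite_Gamma_ball])

text \<open>Every \<open>\<gamma>\<close> lies in a coset \<open>\<rho> G\<close> with \<open>\<rho>\<close> from a fixed finite set of representatives,
  and \<open>\<gamma> = \<rho> g\<close> gives \<open>|T g| \<le> |T \<gamma>| + |T \<rho>|\<close>.\<close>

lemma Ncount_Gamma_le_Ncount_G: obtains q c where "\<And>r. Ncount \<Gamma> r \<le> q * Ncount G (r + c)"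
proof -
  define C where "C = (\<lambda>g. iso_mult g ` G) ` \<Gamma>"
  have finite_C: "finite C" using finite_index_G unfolding C_def finite_index_def .
  have "\<forall>X\<in>C. \<exists>g. g \<in> \<Gamma> \<and> X = iso_mult g ` G" unfolding C_def by blast
  then obtain \<rho> where \<rho>: "\<forall>X\<in>C. \<rho> X \<in> \<Gamma> \<and> X = iso_mult (\<rho> X) ` G"
    by (rule bchoice[THEN exE])
  define c where "c = (\<Sum>X\<in>C. norm (T (\<rho> X)))"
  have "Ncount \<Gamma> r \<le> card C * Ncount G (r + c)" for r
  proof -
    define A where "A X = iso_mult (\<rho> X) ` {g\<in>G. norm (T g) \<le> r + c}" for X
    have "{\<gamma>\<in>\<Gamma>. norm (T \<gamma>) \<le> r} \<subseteq> (\<Union>X\<in>C. A X)"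
    proof clarify
      fix \<gamma> assume \<gamma>: "\<gamma> \<in> \<Gamma>" "norm (T \<gamma>) \<le> r"
      define X where "X = iso_mult \<gamma> ` G"
      have X: "X \<in> C" unfolding X_def C_def using \<gamma> by blast
      have "\<gamma> \<in> X" unfolding X_def using one_in_G by (metis image_eqI iso_mult_one)
      have \<rho>X: "\<rho> X \<in> \<Gamma>" "X = iso_mult (\<rho> X) ` G" using \<rho> X by auto
      then obtain g where g: "g \<in> G" "\<gamma> = iso_mult (\<rho> X) g" using \<open>\<gamma> \<in> X\<close> by blast
      then have "T \<gamma> = fst (\<rho> X) *v T g + T (\<rho> X)" by (simp add: T_iso_mult)
      then have "norm (T g) = norm (T \<gamma> - T (\<rho> X))"
        using norm_orthogonal_matrix_mult[OF orthogonal_Gamma[OF \<rho>X(1)]] by simp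
      also have "\<dots> \<le> norm (T \<gamma>) + norm (T (\<rho> X))" by (rule norm_triangle_ineq4)
      also have "\<dots> \<le> r + c"
        using \<gamma>(2) member_le_sum[OF X _ finite_C, of "\<lambda>X. norm (T (\<rho> X))"] by (simp add: c_def)
      finally show "\<gamma> \<in> (\<Union>X\<in>C. A X)" unfolding A_def using X g by blast
    qed
    then have "card {\<gamma>\<in>\<Gamma>. norm (T \<gamma>) \<le> r} \<le> card (\<Union>X\<in>C. A X)"
      by (rule card_mono[rotated]) (simp add: A_def finite_C finite_G_ball)
    also have "\<dots> \<le> (\<Sum>X\<in>C. card (A X))" by (rule card_UN_le[OF finite_C])
    also have "\<dots> \<le> (\<Sum>X\<in>C. card {g\<in>G. norm (T g) \<le> r + c})"
      unfolding A_def by (rule sum_mono) (rule card_image_le[OF finite_G_ball])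
    finally show ?thesis unfolding Ncount_def by (simp add: of_nat_le_iff[symmetric, where 'a=real])
  qed
  then show ?thesis by (rule that)
qed

lemma NcountV_bigtheta: "NcountV G V \<in> \<Theta>(\<lambda>r. r ^ adim V)"
proof -
  obtain m where m: "\<And>r. NcountV G V r \<le> m * NcountL r" using NcountV_le_NcountL by blast
  show ?thesis
  proof (rule bigtheta_power_if_between_shifts[OF NcountL_bigtheta])
    show "0 \<le> NcountL r" "NcountL (r - 0) \<le> NcountV G V r" "NcountV G V r \<le> m * NcountL (r + 0)"
      for r using m NcountL_le_NcountV by (simp_all add: NcountL_def)
  qed
qed

lemma Ncount_G_bigtheta: "Ncount G \<in> \<Theta>(\<lambda>r. r ^ adim V)"
proof (rule bigtheta_power_if_between_shifts[OF NcountV_bigtheta])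
  show "0 \<le> NcountV G V r" "NcountV G V (r - 2 * norm v0) \<le> Ncount G r"
    "Ncount G r \<le> 1 * NcountV G V (r + 2 * norm v0)" for r
    using NcountV_le_Ncount_G[of "r - 2 * norm v0"] Ncount_G_le_NcountV[of r]
    by (simp_all add: NcountV_def)
qed

lemma Ncount_Gamma_bigtheta: "Ncount \<Gamma> \<in> \<Theta>(\<lambda>r. r ^ adim V)"
proof -
  obtain q c where q: "\<And>r. Ncount \<Gamma> r \<le> q * Ncount G (r + c)"
    using Ncount_Gamma_le_Ncount_G by blast
  show ?thesis
  proof (rule bigtheta_power_if_between_shifts[OF Ncount_G_bigtheta])
    show "0 \<le> Ncount G r" "Ncount G (r - 0) \<le> Ncount \<Gamma> r" "Ncount \<Gamma> r \<le> q * Ncount G (r + c)"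
      for r using q Ncount_G_le_Ncount_Gamma by (simp_all add: Ncount_def)
  qed
qed

end

text \<open>The growth rate of \<open>N\<^sub>\<Gamma>\<close> does not depend on the chosen pair, which makes \<open>dimGamma\<close>
  well defined.\<close>

lemma dimGamma_eq_adim:
  assumes "discrete_subgroup \<Gamma>" "fi_cocompact_translation_pair \<Gamma> G V"
  shows "dimGamma \<Gamma> = adim V"
  unfolding dimGamma_def
proof (rule the_equality)
  show "\<exists>G' V'. fi_cocompact_translation_pair \<Gamma> G' V' \<and> adim V' = adim V" using assms(2) by blast
  fix k assume "\<exists>G' V'. fi_cocompact_translation_pair \<Gamma> G' V' \<and> adim V' = k"
  then obtain G' V' where pair': "fi_cocompact_translation_pair \<Gamma> G' V'" and k: "adim V' = k" by blast
  have "(\<lambda>r. r ^ k) \<in> \<Theta>(Ncount \<Gamma>)"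
    using discrete_translation_pair.Ncount_Gamma_bigtheta[OF discrete_translation_pair.intro[OF assms(1) pair']] k
    by (simp add: bigtheta_sym)
  also have "Ncount \<Gamma> \<in> \<Theta>(\<lambda>r. r ^ adim V)"
    by (rule discrete_translation_pair.Ncount_Gamma_bigtheta[OF discrete_translation_pair.intro[OF assms]])
  finally show "k = adim V" by (rule power_bigtheta_power_imp_eq)
qed

theorem mainTheorem8:
  fixes \<Gamma> G :: "'n::finite iso set" and V :: "(real^'n) set"
  assumes "discrete_subgroup \<Gamma>"
    and "fi_cocompact_translation_pair \<Gamma> G V"
  shows "Ncount \<Gamma> \<in> \<Theta>(Ncount G)
    \<and> Ncount G \<in> \<Theta>(NcountV G V)
    \<and> NcountV G V \<in> \<Theta>(\<lambda>r. r ^ adim V)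
    \<and> (\<lambda>r::real. r ^ adim V) \<in> \<Theta>(\<lambda>r. r ^ dimGamma \<Gamma>)
    \<and> (\<forall>k::nat. dimGamma \<Gamma> = k \<longleftrightarrow> Ncount \<Gamma> \<in> \<Theta>(\<lambda>r. r ^ k))"
proof -
  interpret discrete_translation_pair \<Gamma> G V using assms by unfold_locales
  have dim: "dimGamma \<Gamma> = adim V" by (rule dimGamma_eq_adim[OF assms])
  have "Ncount \<Gamma> \<in> \<Theta>(\<lambda>r. r ^ k) \<longleftrightarrow> adim V = k" for k
  proof
    assume "Ncount \<Gamma> \<in> \<Theta>(\<lambda>r. r ^ k)"
    with Ncount_Gamma_bigtheta have "(\<lambda>r::real. r ^ adim V) \<in> \<Theta>(\<lambda>r. r ^ k)"
      by (metis bigtheta_sym landau_theta.trans)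
    then show "adim V = k" by (rule power_bigtheta_power_imp_eq)
  qed (use Ncount_Gamma_bigtheta in simp)
  with NcountV_bigtheta Ncount_G_bigtheta Ncount_Gamma_bigtheta dim show ?thesis
    by (metis bigtheta_sym landau_theta.trans)
qed

end
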